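(* Let $n\ge 2$, $m\ge 2$, and let $\mathcal{A}=(a_{i_1\ldots i_m})\in S_{m,n+1}$ be a regularly decomposable tensor. Then $\mathcal{A}$ can be written as $$\mathcal{A}=\sum_{k=1}^r \alpha_k\left(\mathbf{v}^{(k)}\right)^{\otimes m},$$ where $\alpha_k>0$ and $\mathbf{v}^{(k)}=(1,v^{(k)}_1,\ldots,v^{(k)}_n)^\top\in\mathbb{R}^{n+1}$ with $\sum_{i=1}^n\left(v^{(k)}_i\right)^2=1$ for $k=1,\ldots,r$. Furthermore, $$a_{00i_3\ldots i_m}=\sum_{i=1}^n a_{ii\,i_3\ldots i_m}$$ for all $i_3,\ldots,i_m\in\{0,1,\ldots,n\}$.
   Context: Vectors in $\mathbb{R}^{n+1}$ are indexed $\mathbf{x}=(x_0,x_1,\ldots,x_n)^\top$, with $n\ge 2$. $S_{m,n+1}$ denotes the space of real symmetric tensors $\mathcal{A}=(a_{i_1\ldots i_m})$ of order $m$ and dimension $n+1$ (indices in $\{0,\ldots,n\}$, entries invariant under permutations of indices). For $\mathbf{u}\in\mathbb{R}^{n+1}$, $\mathbf{u}^{\otimes m}$ is the tensor with entries $u_{i_1}\cdots u_{i_m}$. A vector $\mathbf{x}\in\mathbb{R}^{n+1}$ is regular if $x_0\neq 0$ and $x_0^2=x_1^2+\cdots+x_n^2$. For $\mathcal{A}\in S_{m,n+1}$, its $i$th row tensor is $\mathcal{A}_i=(a_{i i_2\ldots i_m})\in S_{m-1,n+1}$, $i=0,\ldots,n$. Regularly decomposable tensors: (i) if $m=2l$ is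 even, $\mathcal{A}\in S_{m,n+1}$ is regularly decomposable if $\mathcal{A}=\sum_{k=1}^r(\mathbf{u}^{(k)})^{\otimes m}$ for some regular vectors $\mathbf{u}^{(1)},\ldots,\mathbf{u}^{(r)}$; (ii) if $m=2l+1$ is odd, $\mathcal{A}\in S_{m,n+1}$ is regularly decomposable if its row tensor $\mathcal{A}_0\in S_{2l,n+1}$ has a decomposition $\mathcal{A}_0=\sum_{k=1}^r(\mathbf{u}^{(k)})^{\otimes 2l}$ with regular vectors $\mathbf{u}^{(k)}=(u^{(k)}_0,\ldots,u^{(k)}_n)^\top$, and the other row tensors satisfy $\mathcal{A}_i=\sum_{k=1}^r\frac{u^{(k)}_i}{u^{(k)}_0}(\mathbf{u}^{(k)})^{\otimes 2l}$ for $i=1,\ldots,n$. *)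

theory Defs
  imports Complex_Main "HOL-Library.Multiset"
begin

text \<open>Vectors in R^(n+1) are functions nat => real, only the entries 0..n matter.
  A tensor of order m and dimension n+1 is a function on index lists;
  only index lists of length m with entries in {0..n} matter.\<close>

definition idx :: "nat \<Rightarrow> nat \<Rightarrow> nat list set" where
  "idx m n = {xs. length xs = m \<and> set xs \<subseteq> {0..n}}"

definition sym_tensor :: "nat \<Rightarrow> nat \<Rightarrow> (nat list \<Rightarrow> real) \<Rightarrow> bool" where
  "sym_tensor m n A \<longleftrightarrow>
     (\<forall>xs\<in>idx m n. \<forall>ys\<in>idx m n. mset xs = mset ys \<longrightarrow> A xs = A ys)"

definition tpow :: "(nat \<Rightarrow> real) \<Rightarrow> nat list \<Rightarrow> real" where
  "tpow u xs = prod_list (map u xs)"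

definition regular :: "nat \<Rightarrow> (nat \<Rightarrow> real) \<Rightarrow> bool" where
  "regular n x \<longleftrightarrow> x 0 \<noteq> 0 \<and> (x 0)\<^sup>2 = (\<Sum>i=1..n. (x i)\<^sup>2)"

definition reg_decomposable :: "nat \<Rightarrow> nat \<Rightarrow> (nat list \<Rightarrow> real) \<Rightarrow> bool" where
  "reg_decomposable m n A \<longleftrightarrow>
    (if even m then
      (\<exists>(r::nat) (u::nat \<Rightarrow> nat \<Rightarrow> real). (\<forall>k<r. regular n (u k)) \<and>
         (\<forall>xs\<in>idx m n. A xs = (\<Sum>k<r. tpow (u k) xs)))
     else
      (\<exists>(r::nat) (u::nat \<Rightarrow> nat \<Rightarrow> real). (\<forall>k<r. regular n (u k)) \<and>
         (\<forall>xs\<in>idx (m - 1) n. A (0 # xs) = (\<Sum>k<r. tpow (u k) xs)) \<and>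
         (\<forall>i\<in>{1..n}. \<forall>xs\<in>idx (m - 1) n.
             A (i # xs) = (\<Sum>k<r. (u k i / u k 0) * tpow (u k) xs))))"

end

theory Submission
  imports Defs
begin

text \<open>Dividing a regular vector u by its entry u 0 moves it onto the unit sphere in the
  hyperplane x 0 = 1 and turns the tensor power of order p into (u 0)^p times the power of the
  new vector; for even p that factor is positive. In the odd case the row tensors carry one
  extra factor u i / u 0, which makes up the missing index, so p = m - 1 there.
  The trace identity holds for any combination of tensor powers of vectors on the light cone
  (x 0)^2 = (x 1)^2 + ... + (x n)^2: contracting the first two slots of such a power
  gives (x 0)^2 on one side and (x 1)^2 + ... + (x n)^2 on the other.\<close>

definition dehomogenize :: "(nat \<Rightarrow> real) \<Rightarrow> nat \<Rightarrow> real" where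
  "dehomogenize u i = u i / u 0"

definition unit_decomposable :: "nat \<Rightarrow> nat \<Rightarrow> (nat list \<Rightarrow> real) \<Rightarrow> bool" where
  "unit_decomposable m n A \<longleftrightarrow>
    (\<exists>(r::nat) (\<alpha>::nat \<Rightarrow> real) (v::nat \<Rightarrow> nat \<Rightarrow> real).
       (\<forall>k<r. \<alpha> k > 0 \<and> v k 0 = 1 \<and> (\<Sum>i=1..n. (v k i)\<^sup>2) = 1) \<and>
       (\<forall>xs\<in>idx m n. A xs = (\<Sum>k<r. \<alpha> k * tpow (v k) xs)))"

lemma tpow_Cons: "tpow u (x # xs) = u x * tpow u xs"
  by (simp add: tpow_def)

lemma tpow_dehomogenize:
  assumes "u 0 \<noteq> 0"
  shows "tpow u xs = u 0 ^ length xs * tpow (dehomogenize u) xs"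
  using assms by (induction xs) (auto simp: tpow_def dehomogenize_def)

lemma dehomogenize_0: "u 0 \<noteq> 0 \<Longrightarrow> dehomogenize u 0 = 1"
  by (simp add: dehomogenize_def)

lemma regular_dehomogenize_sphere:
  assumes "regular n u"
  shows "(\<Sum>i=1..n. (dehomogenize u i)\<^sup>2) = 1"
proof -
  have "(\<Sum>i=1..n. (dehomogenize u i)\<^sup>2) = (\<Sum>i=1..n. (u i)\<^sup>2) / (u 0)\<^sup>2"
    by (simp add: dehomogenize_def power_divide sum_divide_distrib)
  also have "\<dots> = 1"
    using assms unfolding regular_def by (metis divide_self power_not_zero)
  finally show ?thesis .
qed

lemma light_cone_combination_trace:
  fixes r :: nat
  assumes cone: "\<forall>k<r. (v k 0)\<^sup>2 = (\<Sum>i=1..n. (v k i)\<^sup>2)"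
    and A: "\<forall>xs\<in>idx m n. A xs = (\<Sum>k<r. \<alpha> k * tpow (v k) xs)"
    and ys: "ys \<in> idx (m - 2) n" and "m \<ge> 2"
  shows "A (0 # 0 # ys) = (\<Sum>i=1..n. A (i # i # ys))"
proof -
  have mem: "i # i # ys \<in> idx m n" if "i \<le> n" for i
    using ys that \<open>m \<ge> 2\<close> by (auto simp: idx_def)
  have "A (0 # 0 # ys) = (\<Sum>k<r. \<alpha> k * (v k 0)\<^sup>2 * tpow (v k) ys)"
    using A mem[of 0] by (simp add: tpow_Cons power2_eq_square mult.assoc)
  also have "\<dots> = (\<Sum>k<r. \<Sum>i=1..n. \<alpha> k * (v k i)\<^sup>2 * tpow (v k) ys)"
    using cone by (intro sum.cong) (simp_all add: sum_distrib_left sum_distrib_right)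
  also have "\<dots> = (\<Sum>i=1..n. \<Sum>k<r. \<alpha> k * tpow (v k) (i # i # ys))"
    by (subst sum.swap) (simp add: tpow_Cons power2_eq_square mult.assoc)
  also have "\<dots> = (\<Sum>i=1..n. A (i # i # ys))"
    using A mem by (auto intro!: sum.cong)
  finally show ?thesis .
qed

lemma unit_decomposable_trace:
  assumes "unit_decomposable m n A" "m \<ge> 2" "ys \<in> idx (m - 2) n"
  shows "A (0 # 0 # ys) = (\<Sum>i=1..n. A (i # i # ys))"
proof -
  obtain r :: nat and \<alpha> v where v: "\<forall>k<r. \<alpha> k > 0 \<and> v k 0 = 1 \<and> (\<Sum>i=1..n. (v k i)\<^sup>2) = 1"
    and A: "\<forall>xs\<in>idx m n. A xs = (\<Sum>k<r. \<alpha> k * tpow (v k) xs)"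
    using assms(1) unfolding unit_decomposable_def by meson
  from v have "\<forall>k<r. (v k 0)\<^sup>2 = (\<Sum>i=1..n. (v k i)\<^sup>2)"
    by simp
  with A assms(2,3) show ?thesis
    by (intro light_cone_combination_trace)
qed

lemma unit_decomposable_if_dehomogenized_sum:
  fixes r :: nat
  assumes "even p" and reg: "\<forall>k<r. regular n (u k)"
    and A: "\<forall>xs\<in>idx m n. A xs = (\<Sum>k<r. (u k 0) ^ p * tpow (dehomogenize (u k)) xs)"
  shows "unit_decomposable m n A"
  unfolding unit_decomposable_def
proof (intro exI conjI allI impI)
  fix k assume "k < r"
  with reg have "u k 0 \<noteq> 0" "regular n (u k)"
    by (auto simp: regular_def)
  with \<open>even p\<close> show "(u k 0) ^ p > 0" "dehomogenize (u k) 0 = 1"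
    by (simp_all add: zero_less_power_eq dehomogenize_0)
  show "(\<Sum>i=1..n. (dehomogenize (u k) i)\<^sup>2) = 1"
    using \<open>regular n (u k)\<close> by (rule regular_dehomogenize_sphere)
qed (use A in blast)

lemma reg_decomposable_even_dehomogenized:
  assumes "even m" "reg_decomposable m n A"
  shows "\<exists>(r::nat) u. (\<forall>k<r. regular n (u k)) \<and>
           (\<forall>xs\<in>idx m n. A xs = (\<Sum>k<r. (u k 0) ^ m * tpow (dehomogenize (u k)) xs))"
proof -
  obtain r :: nat and u where reg: "\<forall>k<r. regular n (u k)"
    and A: "\<forall>xs\<in>idx m n. A xs = (\<Sum>k<r. tpow (u k) xs)"
    using assms unfolding reg_decomposable_def by meson
  have "A xs = (\<Sum>k<r. (u k 0) ^ m * tpow (dehomogenize (u k)) xs)" if "xs \<in> idx m n" for xs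
    using A reg that by (auto simp: idx_def regular_def tpow_dehomogenize intro!: sum.cong)
  with reg show ?thesis
    by blast
qed

lemma reg_decomposable_odd_dehomogenized:
  assumes "odd m" "reg_decomposable m n A"
  shows "\<exists>(r::nat) u. (\<forall>k<r. regular n (u k)) \<and>
           (\<forall>xs\<in>idx m n. A xs = (\<Sum>k<r. (u k 0) ^ (m - 1) * tpow (dehomogenize (u k)) xs))"
proof -
  obtain r :: nat and u where reg: "\<forall>k<r. regular n (u k)"
    and row0: "\<forall>xs\<in>idx (m - 1) n. A (0 # xs) = (\<Sum>k<r. tpow (u k) xs)"
    and rows: "\<forall>i\<in>{1..n}. \<forall>xs\<in>idx (m - 1) n.
                 A (i # xs) = (\<Sum>k<r. (u k i / u k 0) * tpow (u k) xs)"
    using assms unfolding reg_decomposable_def by meson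
  have nz: "\<forall>k<r. u k 0 \<noteq> 0"
    using reg by (simp add: regular_def)
  have row: "A (i # xs) = (\<Sum>k<r. dehomogenize (u k) i * tpow (u k) xs)"
    if "i \<le> n" "xs \<in> idx (m - 1) n" for i xs
    using that row0 rows nz by (cases "i = 0") (auto simp: dehomogenize_def)
  have "A xs = (\<Sum>k<r. (u k 0) ^ (m - 1) * tpow (dehomogenize (u k)) xs)"
    if xs: "xs \<in> idx m n" for xs
  proof -
    from xs \<open>odd m\<close> obtain i ys where "xs = i # ys" "i \<le> n" "ys \<in> idx (m - 1) n"
      by (cases xs) (auto simp: idx_def)
    then show ?thesis
      using row nz by (auto simp: idx_def tpow_Cons tpow_dehomogenize intro!: sum.cong)
  qed
  with reg show ?thesis
    by blast
qed

lemma reg_decomposable_imp_unit_decomposable: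
  assumes "m \<ge> 1" "reg_decomposable m n A"
  shows "unit_decomposable m n A"
proof (cases "even m")
  case True
  then obtain r :: nat and u where "\<forall>k<r. regular n (u k)"
    "\<forall>xs\<in>idx m n. A xs = (\<Sum>k<r. (u k 0) ^ m * tpow (dehomogenize (u k)) xs)"
    using reg_decomposable_even_dehomogenized assms(2) by blast
  with True show ?thesis
    by (rule unit_decomposable_if_dehomogenized_sum)
next
  case False
  with assms(1) have "even (m - 1)"
    by simp
  obtain r :: nat and u where "\<forall>k<r. regular n (u k)"
    "\<forall>xs\<in>idx m n. A xs = (\<Sum>k<r. (u k 0) ^ (m - 1) * tpow (dehomogenize (u k)) xs)"
    using reg_decomposable_odd_dehomogenized False assms(2) by blast
  with \<open>even (m - 1)\<close> show ?thesis
    by (rule unit_decomposable_if_dehomogenized_sum)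
qed

theorem theorem2p4:
  fixes m n :: nat and A :: "nat list \<Rightarrow> real"
  assumes "n \<ge> 2" and "m \<ge> 2"
    and "sym_tensor m n A"
    and "reg_decomposable m n A"
  shows "(\<exists>(r::nat) (\<alpha>::nat \<Rightarrow> real) (v::nat \<Rightarrow> nat \<Rightarrow> real).
            (\<forall>k<r. \<alpha> k > 0 \<and> v k 0 = 1 \<and> (\<Sum>i=1..n. (v k i)\<^sup>2) = 1) \<and>
            (\<forall>xs\<in>idx m n. A xs = (\<Sum>k<r. \<alpha> k * tpow (v k) xs)))
       \<and> (\<forall>ys\<in>idx (m - 2) n. A (0 # 0 # ys) = (\<Sum>i=1..n. A (i # i # ys)))"
proof -
  have "unit_decomposable m n A"
    using assms(2,4) by (intro reg_decomposable_imp_unit_decomposable) simp_all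
  then show ?thesis
    using unit_decomposable_trace[OF _ assms(2)] unfolding unit_decomposable_def by blast
qed

end
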